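(* Let $G$ be a graph of order $n$ with minimum degree $\delta(G)\geq\frac{n-1}{2}$. Then $prc(G)=\chi'(G)$.
   Context: A path in an edge-coloured graph is a rainbow path if its edges receive pairwise distinct colours. The proper rainbow connection number $prc(G)$ of a connected graph is the minimum number of colours in a proper edge-colouring (adjacent edges get distinct colours) such that every two distinct vertices are joined by a rainbow path. $\chi'(G)$ is the chromatic index. *)

theory Defs
  imports Main
begin

definition simple_graph :: "'a set \<Rightarrow> 'a set set \<Rightarrow> bool" where
  "simple_graph V E \<longleftrightarrow> finite V \<and> (\<forall>e\<in>E. e \<subseteq> V \<and> card e = 2)"

definition degree :: "'a set set \<Rightarrow> 'a \<Rightarrow> nat" where
  "degree E v = card {e\<in>E. v \<in> e}"

definition proper_edge_colouring :: "'a set set \<Rightarrow> ('a set \<Rightarrow> nat) \<Rightarrow> bool" where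
  "proper_edge_colouring E c \<longleftrightarrow>
     (\<forall>e\<in>E. \<forall>f\<in>E. e \<noteq> f \<and> e \<inter> f \<noteq> {} \<longrightarrow> c e \<noteq> c f)"

definition is_path :: "'a set set \<Rightarrow> 'a list \<Rightarrow> bool" where
  "is_path E xs \<longleftrightarrow> xs \<noteq> [] \<and> distinct xs \<and>
     (\<forall>i. Suc i < length xs \<longrightarrow> {xs ! i, xs ! Suc i} \<in> E)"

definition path_edges :: "'a list \<Rightarrow> 'a set list" where
  "path_edges xs = map (\<lambda>i. {xs ! i, xs ! Suc i}) [0..<length xs - 1]"

definition rainbow_path :: "'a set set \<Rightarrow> ('a set \<Rightarrow> nat) \<Rightarrow> 'a list \<Rightarrow> bool" where
  "rainbow_path E c xs \<longleftrightarrow> is_path E xs \<and> distinct (map c (path_edges xs))"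

definition rainbow_connected :: "'a set \<Rightarrow> 'a set set \<Rightarrow> ('a set \<Rightarrow> nat) \<Rightarrow> bool" where
  "rainbow_connected V E c \<longleftrightarrow>
     (\<forall>u\<in>V. \<forall>v\<in>V. u \<noteq> v \<longrightarrow>
        (\<exists>xs. rainbow_path E c xs \<and> hd xs = u \<and> last xs = v))"

definition chromatic_index :: "'a set set \<Rightarrow> nat" where
  "chromatic_index E = (LEAST k. \<exists>c. proper_edge_colouring E c \<and> card (c ` E) = k)"

definition prc :: "'a set \<Rightarrow> 'a set set \<Rightarrow> nat" where
  "prc V E = (LEAST k. \<exists>c. proper_edge_colouring E c \<and> rainbow_connected V E c
                             \<and> card (c ` E) = k)"

end

theory Submission
  imports Defs
begin

text \<open>Two non-adjacent vertices u, v with degree sum at least n - 1 have a common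
  neighbour, since their neighbourhoods lie in the n - 2 remaining vertices. So under
  the minimum degree condition the graph has diameter at most 2, and in a proper edge
  colouring every path with at most two edges is rainbow: every proper colouring is
  already rainbow connected, whence the two minima coincide.\<close>

lemma simple_graph_edge_neq:
  assumes "simple_graph V E" "{x, y} \<in> E"
  shows "x \<noteq> y"
  using assms unfolding simple_graph_def by fastforce

lemma degree_le_card_neighbours:
  assumes "simple_graph V E"
  shows "degree E u \<le> card {w\<in>V. {u, w} \<in> E}"
proof -
  have fin: "finite V" using assms unfolding simple_graph_def by auto
  have "{e\<in>E. u \<in> e} \<subseteq> (\<lambda>w. {u, w}) ` {w\<in>V. {u, w} \<in> E}"
  proof
    fix e assume e: "e \<in> {e\<in>E. u \<in> e}"
    then have "card e = 2" "e \<subseteq> V" using assms unfolding simple_graph_def by auto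
    then obtain a b where "e = {a, b}" by (meson card_2_iff)
    with e \<open>e \<subseteq> V\<close> show "e \<in> (\<lambda>w. {u, w}) ` {w\<in>V. {u, w} \<in> E}"
      by (auto simp: insert_commute)
  qed
  then have "card {e\<in>E. u \<in> e} \<le> card ((\<lambda>w. {u, w}) ` {w\<in>V. {u, w} \<in> E})"
    using fin by (intro card_mono) auto
  also have "\<dots> \<le> card {w\<in>V. {u, w} \<in> E}"
    by (rule card_image_le) (use fin in auto)
  finally show ?thesis unfolding degree_def .
qed

lemma common_neighbour_if_degree_sum:
  assumes g: "simple_graph V E"
    and deg: "card V \<le> degree E u + degree E v + 1"
    and "u \<in> V" "v \<in> V" "u \<noteq> v" "{u, v} \<notin> E"
  shows "\<exists>w. {u, w} \<in> E \<and> {w, v} \<in> E"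
proof (rule ccontr)
  assume no_common: "\<not> ?thesis"
  have fin: "finite V" using g unfolding simple_graph_def by auto
  define A where "A = {w\<in>V. {u, w} \<in> E}"
  define B where "B = {w\<in>V. {v, w} \<in> E}"
  have "A \<union> B \<subseteq> V - {u, v}"
    using simple_graph_edge_neq[OF g] \<open>{u, v} \<notin> E\<close>
    by (auto simp: A_def B_def insert_commute)
  then have "card (A \<union> B) \<le> card (V - {u, v})"
    using fin by (intro card_mono) auto
  moreover have "card (V - {u, v}) + 2 = card V"
    using fin \<open>u \<in> V\<close> \<open>v \<in> V\<close> \<open>u \<noteq> v\<close> card_mono[OF fin, of "{u, v}"]
    by (simp add: card_Diff_subset)
  moreover have "A \<inter> B = {}"
    using no_common by (auto simp: A_def B_def insert_commute)
  then have "card (A \<union> B) = card A + card B"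
    using fin by (intro card_Un_disjoint) (auto simp: A_def B_def)
  moreover have "degree E u \<le> card A" "degree E v \<le> card B"
    using degree_le_card_neighbours[OF g] by (simp_all add: A_def B_def)
  ultimately show False using deg by linarith
qed

lemma rainbow_path_edge:
  assumes "{u, v} \<in> E" "u \<noteq> v"
  shows "rainbow_path E c [u, v]"
  using assms
  by (auto simp: rainbow_path_def is_path_def path_edges_def less_Suc_eq)

lemma rainbow_path_two_edges:
  assumes "proper_edge_colouring E c" "{u, w} \<in> E" "{w, v} \<in> E"
    and "distinct [u, w, v]"
  shows "rainbow_path E c [u, w, v]"
proof -
  have "{u, w} \<noteq> {w, v}" using \<open>distinct [u, w, v]\<close> by (auto simp: doubleton_eq_iff)
  moreover have "{u, w} \<inter> {w, v} \<noteq> {}" by blast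
  ultimately have "c {u, w} \<noteq> c {w, v}"
    using assms(1-3) unfolding proper_edge_colouring_def by metis
  moreover have "path_edges [u, w, v] = [{u, w}, {w, v}]"
    by (simp add: path_edges_def upt_rec)
  moreover have "is_path E [u, w, v]"
    unfolding is_path_def
  proof (intro conjI allI impI)
    fix i assume "Suc i < length [u, w, v]"
    then have "i = 0 \<or> i = 1" by auto
    then show "{[u, w, v] ! i, [u, w, v] ! Suc i} \<in> E" using assms(2,3) by auto
  qed (use assms(4) in simp_all)
  ultimately show ?thesis unfolding rainbow_path_def by simp
qed

lemma proper_edge_colouring_rainbow_connected_if_diameter_le_2:
  assumes g: "simple_graph V E"
    and diam: "\<And>u v. u \<in> V \<Longrightarrow> v \<in> V \<Longrightarrow> u \<noteq> v \<Longrightarrow> {u, v} \<notin> E \<Longrightarrow>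
                 \<exists>w. {u, w} \<in> E \<and> {w, v} \<in> E"
    and c: "proper_edge_colouring E c"
  shows "rainbow_connected V E c"
  unfolding rainbow_connected_def
proof (intro ballI impI)
  fix u v assume "u \<in> V" "v \<in> V" "u \<noteq> v"
  show "\<exists>xs. rainbow_path E c xs \<and> hd xs = u \<and> last xs = v"
  proof (cases "{u, v} \<in> E")
    case True
    then show ?thesis using rainbow_path_edge \<open>u \<noteq> v\<close> by force
  next
    case False
    then obtain w where w: "{u, w} \<in> E" "{w, v} \<in> E"
      using diam \<open>u \<in> V\<close> \<open>v \<in> V\<close> \<open>u \<noteq> v\<close> by blast
    then have "distinct [u, w, v]"
      using simple_graph_edge_neq[OF g] \<open>u \<noteq> v\<close> by auto
    then show ?thesis using rainbow_path_two_edges[OF c w] by force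
  qed
qed

lemma prc_eq_chromatic_index_if_proper_rainbow_connected:
  assumes "\<And>c. proper_edge_colouring E c \<Longrightarrow> rainbow_connected V E c"
  shows "prc V E = chromatic_index E"
  unfolding prc_def chromatic_index_def using assms by metis

theorem proposition5p8:
  fixes V :: "'a set" and E :: "'a set set"
  assumes "simple_graph V E"
    and "\<forall>v\<in>V. 2 * int (degree E v) \<ge> int (card V) - 1"
  shows "prc V E = chromatic_index E"
proof (rule prc_eq_chromatic_index_if_proper_rainbow_connected)
  fix c assume "proper_edge_colouring E c"
  moreover have "\<exists>w. {u, w} \<in> E \<and> {w, v} \<in> E"
    if "u \<in> V" "v \<in> V" "u \<noteq> v" "{u, v} \<notin> E" for u v
  proof (rule common_neighbour_if_degree_sum[OF assms(1) _ that])
    show "card V \<le> degree E u + degree E v + 1"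
      using assms(2)[rule_format, OF \<open>u \<in> V\<close>] assms(2)[rule_format, OF \<open>v \<in> V\<close>]
      by linarith
  qed
  ultimately show "rainbow_connected V E c"
    using proper_edge_colouring_rainbow_connected_if_diameter_le_2[OF assms(1)] by blast
qed

end
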